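(* Let $f:\mathbb{R}^d\to\mathbb{R}$ be convex and $L$-smooth (i.e., $\|\nabla f(x)-\nabla f(y)\|\le L\|x-y\|$ for all $x,y$), and let $x^\star$ be a minimizer of $f$. Fix an integer $N\ge 1$ and define positive scalars $\theta_N=1$ and, for $k=N-1,\dots,0$, $\theta_k>0$ by $\theta_k^2-\theta_k=\theta_{k+1}^2$; additionally set $\theta_{N+1}=0$. Given $x_0\in\mathbb{R}^d$, let $v_0=\mathbf{0}$ and for $k=0,\dots,N-1$, $$v_{k+1}=v_k+\frac{1}{L\theta_k\theta_{k+1}^2}\nabla f(x_k),\qquad x_{k+1}=x_k-\frac{1}{L}\nabla f(x_k)-(2\theta_{k+1}^3-\theta_{k+1}^2)v_{k+1}.$$ Define, for $k=0,\dots,N$, $A_k=\frac{1}{\theta_k^2}\big(f(x_N)-f(x^\star)-\frac{1}{2L}\|\nabla f(x_N)\|^2\big)$, $B_k=\frac{1}{\theta_k^2}(f(x_k)-f(x^\star))$, $C_k=\frac{1}{2L\theta_k^2}\|\nabla f(x_k)\|^2$, and $E_k=\frac{\theta_{k+1}^2}{\theta_k}\langle\nabla f(x_k),v_k\rangle$. Then for every $k\in\{0,\dots,N-1\}$, $$A_k+B_{k+1}+C_{k+1}+E_{k+1}\le A_{k+1}+B_k+C_k+E_k-\theta_{k+1}\langle\nabla f(x_{k+1}),v_{k+1}\rangle+\sum_{i=k+1}^{N}\frac{\theta_i}{L\theta_k\theta_{k+1}^2}\langle\nabla f(x_k),\nabla f(x_i)\rangle.$$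
   Context: The iteration above is the paper's "momentum" reformulation of the optimized gradient method for gradient minimization (OGM-G). $\langle\cdot,\cdot\rangle$ and $\|\cdot\|$ are the Euclidean inner product and norm. *)

theory Defs
  imports "HOL-Analysis.Analysis"
begin

end

theory Submission
  imports Defs
begin

text \<open>
  For a convex function with \<open>L\<close>-Lipschitz gradient \<open>g\<close> one has the interpolation inequality
  \<open>f y + \<langle>g y, x - y\<rangle> + \<parallel>g x - g y\<parallel>\<^sup>2 / (2L) \<le> f x\<close>. The claimed inequality is the sum of its
  instances for the pairs \<open>(x\<^sub>k\<^sub>+\<^sub>1, x\<^sub>k)\<close> and \<open>(x\<^sub>k, x\<^sub>N)\<close>, weighted by \<open>1/\<theta>\<^sub>k\<^sub>+\<^sub>1\<^sup>2\<close> and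
  \<open>1/(\<theta>\<^sub>k \<theta>\<^sub>k\<^sub>+\<^sub>1\<^sup>2)\<close>. The second instance becomes explicit because the momentum recursion
  unrolls to \<open>x\<^sub>k - x\<^sub>N = (1/L) \<Sum>\<^sub>i\<^sub>=\<^sub>k\<^sup>N\<^sup>-\<^sup>1 \<theta>\<^sub>i g(x\<^sub>i) + \<theta>\<^sub>k\<^sub>+\<^sub>1\<^sup>4 v\<^sub>k\<close>, with the convention
  \<open>\<theta>\<^sub>N\<^sub>+\<^sub>1 = 0\<close> extending \<open>\<theta>\<^sub>k\<^sub>+\<^sub>1\<^sup>2 = \<theta>\<^sub>k\<^sup>2 - \<theta>\<^sub>k\<close> to \<open>k = N\<close>.
  The value \<open>f x\<^sup>\<star>\<close> only enters as a common offset, so neither minimality of \<open>x\<^sup>\<star>\<close> nor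
  \<open>v\<^sub>0 = 0\<close> is used.
\<close>

lemma has_real_derivative_along_line:
  fixes f :: "'a::real_inner \<Rightarrow> real"
  assumes grad: "\<And>y. (f has_derivative (\<lambda>h. g y \<bullet> h)) (at y)"
  shows "((\<lambda>t. f (y + t *\<^sub>R d)) has_real_derivative (g (y + t *\<^sub>R d) \<bullet> d)) (at t within S)"
proof -
  have "((\<lambda>t. y + t *\<^sub>R d) has_derivative (\<lambda>s. s *\<^sub>R d)) (at t within S)"
    by (auto intro!: derivative_eq_intros)
  from has_derivative_compose[OF this grad]
  have "((\<lambda>t. f (y + t *\<^sub>R d)) has_derivative (\<lambda>s. g (y + t *\<^sub>R d) \<bullet> (s *\<^sub>R d))) (at t within S)"
    by (simp add: o_def)
  moreover have "(\<lambda>s. g (y + t *\<^sub>R d) \<bullet> (s *\<^sub>R d)) = (*) (g (y + t *\<^sub>R d) \<bullet> d)"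
    by (auto simp: mult.commute)
  ultimately show ?thesis
    by (simp add: has_field_derivative_def)
qed

lemma convex_on_gradient_ineq:
  fixes f :: "'a::real_inner \<Rightarrow> real"
  assumes conv: "convex_on UNIV f"
    and grad: "\<And>y. (f has_derivative (\<lambda>h. g y \<bullet> h)) (at y)"
  shows "f y + g y \<bullet> (z - y) \<le> f z"
proof -
  define h where "h t = f (y + t *\<^sub>R (z - y))" for t :: real
  have "convex_on UNIV h"
  proof (rule convex_onI)
    fix t u w :: real
    assume t: "0 < t" "t < 1"
    have "y + ((1 - t) *\<^sub>R u + t *\<^sub>R w) *\<^sub>R (z - y)
        = (1 - t) *\<^sub>R (y + u *\<^sub>R (z - y)) + t *\<^sub>R (y + w *\<^sub>R (z - y))"
      by (simp add: algebra_simps)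
    then show "h ((1 - t) *\<^sub>R u + t *\<^sub>R w) \<le> (1 - t) * h u + t * h w"
      unfolding h_def using convex_onD[OF conv, of t] t by simp
  qed simp
  moreover have "(h has_real_derivative (g y \<bullet> (z - y))) (at 0 within UNIV)"
    unfolding h_def using has_real_derivative_along_line[OF grad, of y "z - y" 0] by simp
  ultimately have "h 1 - h 0 \<ge> g y \<bullet> (z - y)"
    using convex_on_imp_above_tangent[of UNIV h 0 1] by simp
  then show ?thesis
    unfolding h_def by simp
qed

lemma lipschitz_gradient_upper_bound:
  fixes f :: "'a::real_inner \<Rightarrow> real"
  assumes grad: "\<And>y. (f has_derivative (\<lambda>h. g y \<bullet> h)) (at y)"
    and smooth: "\<And>y z. norm (g y - g z) \<le> L * norm (y - z)"
  shows "f z \<le> f y + g y \<bullet> (z - y) + L / 2 * (norm (z - y))\<^sup>2"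
proof -
  define d where "d = z - y"
  define p where "p t = f (y + t *\<^sub>R d) - t * (g y \<bullet> d) - L / 2 * t\<^sup>2 * (norm d)\<^sup>2" for t :: real
  define p' where "p' t = g (y + t *\<^sub>R d) \<bullet> d - g y \<bullet> d - L * t * (norm d)\<^sup>2" for t :: real
  have "p 1 \<le> p 0"
  proof (rule deriv_nonpos_imp_antimono[of 0 1 p p'])
    fix t :: real
    show "(p has_real_derivative p' t) (at t)"
      unfolding p_def p'_def
      by (intro DERIV_diff has_real_derivative_along_line[OF grad]) (auto intro!: derivative_eq_intros)
    assume "t \<in> {0..1}"
    have "(g (y + t *\<^sub>R d) - g y) \<bullet> d \<le> norm (g (y + t *\<^sub>R d) - g y) * norm d"
      by (rule norm_cauchy_schwarz)
    also have "\<dots> \<le> L * norm (t *\<^sub>R d) * norm d"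
      using smooth[of "y + t *\<^sub>R d" y] by (intro mult_right_mono) auto
    also have "\<dots> = L * t * (norm d)\<^sup>2"
      using \<open>t \<in> {0..1}\<close> by (simp add: power2_eq_square)
    finally show "p' t \<le> 0"
      unfolding p'_def by (simp add: inner_diff_left)
  qed simp
  then show ?thesis
    unfolding p_def d_def by simp
qed

lemma power2_norm_diff:
  fixes a b :: "'a::real_inner"
  shows "(norm (a - b))\<^sup>2 = (norm a)\<^sup>2 - 2 * (a \<bullet> b) + (norm b)\<^sup>2"
  by (simp add: power2_norm_eq_inner inner_diff_left inner_diff_right inner_commute)

text \<open>Apply the upper bound at \<open>y\<close> to the point \<open>y - (g y - g x)/L\<close> and the gradient
  inequality at \<open>x\<close> to the same point.\<close>

lemma convex_smooth_interpolation:
  fixes f :: "'a::real_inner \<Rightarrow> real"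
  assumes L: "L > 0" and conv: "convex_on UNIV f"
    and grad: "\<And>y. (f has_derivative (\<lambda>h. g y \<bullet> h)) (at y)"
    and smooth: "\<And>y z. norm (g y - g z) \<le> L * norm (y - z)"
  shows "f x + g x \<bullet> (y - x) + (norm (g y - g x))\<^sup>2 / (2 * L) \<le> f y"
proof -
  define D where "D = g y - g x"
  define z where "z = y - (1 / L) *\<^sub>R D"
  have "f x + g x \<bullet> (z - x) \<le> f z"
    by (rule convex_on_gradient_ineq[OF conv grad])
  also have "f z \<le> f y + g y \<bullet> (z - y) + L / 2 * (norm (z - y))\<^sup>2"
    by (rule lipschitz_gradient_upper_bound[OF grad smooth])
  finally have "f x + g x \<bullet> (y - x) - (g x \<bullet> D) / L
      \<le> f y - (g y \<bullet> D) / L + L / 2 * ((norm D)\<^sup>2 / L\<^sup>2)"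
    unfolding z_def using L by (simp add: inner_diff_right power_divide algebra_simps)
  moreover have "L / 2 * ((norm D)\<^sup>2 / L\<^sup>2) = (norm D)\<^sup>2 / (2 * L)"
    using L by (simp add: power2_eq_square)
  moreover have "(g x \<bullet> D) / L - (g y \<bullet> D) / L = - 2 * ((norm D)\<^sup>2 / (2 * L))"
  proof -
    have "g y \<bullet> D = g x \<bullet> D + (norm D)\<^sup>2"
      unfolding D_def by (simp add: power2_norm_eq_inner inner_diff_left)
    then show ?thesis
      using L by (simp add: field_simps)
  qed
  ultimately show ?thesis
    unfolding D_def by linarith
qed

text \<open>The scalars stand for \<open>a, b, c = \<theta>\<^sub>k, \<theta>\<^sub>k\<^sub>+\<^sub>1, \<theta>\<^sub>k\<^sub>+\<^sub>2\<close>; \<open>F0, F1, FN, Fs = f(x\<^sub>k), f(x\<^sub>k\<^sub>+\<^sub>1), f(x\<^sub>N), f(x\<^sup>\<star>)\<close>;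
  \<open>n0, n1, nN\<close> the squared norms of \<open>g\<^sub>k, g\<^sub>k\<^sub>+\<^sub>1, g\<^sub>N\<close> (where \<open>g\<^sub>i = g(x\<^sub>i)\<close>);
  \<open>c01 = \<langle>g\<^sub>k, g\<^sub>k\<^sub>+\<^sub>1\<rangle>\<close>, \<open>c0N = \<langle>g\<^sub>k, g\<^sub>N\<rangle>\<close>, \<open>w0 = \<langle>g\<^sub>k, v\<^sub>k\<rangle>\<close>, \<open>w1 = \<langle>g\<^sub>k\<^sub>+\<^sub>1, v\<^sub>k\<^sub>+\<^sub>1\<rangle>\<close> and
  \<open>s = \<langle>g\<^sub>k, \<Sum>\<^sub>i\<^sub>=\<^sub>k\<^sup>N\<^sup>-\<^sup>1 \<theta>\<^sub>i g\<^sub>i\<rangle>\<close>.\<close>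

lemma ogm_g_potential_combination:
  fixes L a b c F0 F1 FN Fs n0 n1 nN c01 c0N w0 w1 s :: real
  assumes L: "L > 0" and a: "a > 0" and b: "b > 0"
    and ab: "a\<^sup>2 - a = b\<^sup>2" and cb: "c\<^sup>2 = b\<^sup>2 - b"
    and consecutive: "F1 + c01 / L + (2 * b ^ 3 - b\<^sup>2) * w1 + (n0 - 2 * c01 + n1) / (2 * L) \<le> F0"
    and to_last: "F0 - s / L - b ^ 4 * w0 + (nN - 2 * c0N + n0) / (2 * L) \<le> FN"
  shows "(1 / a\<^sup>2) * (FN - Fs - (1 / (2 * L)) * nN) + (1 / b\<^sup>2) * (F1 - Fs)
           + (1 / (2 * L * b\<^sup>2)) * n1 + (c\<^sup>2 / b) * w1
     \<le> (1 / b\<^sup>2) * (FN - Fs - (1 / (2 * L)) * nN) + (1 / a\<^sup>2) * (F0 - Fs)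
           + (1 / (2 * L * a\<^sup>2)) * n0 + (b\<^sup>2 / a) * w0 - b * w1
           + (1 / (L * a * b\<^sup>2)) * (s - a * n0 + c0N)"
proof -
  have ab': "b\<^sup>2 = a * (a - 1)"
    using ab by (simp add: algebra_simps power2_eq_square)
  then have "a - 1 > 0"
    using a b by (metis zero_less_mult_pos zero_less_power2 less_irrefl)
  then have ia: "1 / a\<^sup>2 = (a - 1) / (a * b\<^sup>2)" and i2: "1 / (2 * L * a\<^sup>2) = (a - 1) / (2 * L * a * b\<^sup>2)"
    using a L unfolding ab' by (simp_all add: field_simps power2_eq_square)
  define q1 where "q1 = F0 - (F1 + c01 / L + (2 * b ^ 3 - b\<^sup>2) * w1 + (n0 - 2 * c01 + n1) / (2 * L))"
  define q2 where "q2 = FN - (F0 - s / L - b ^ 4 * w0 + (nN - 2 * c0N + n0) / (2 * L))"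
  have "(1 / b\<^sup>2) * (FN - Fs - (1 / (2 * L)) * nN) + (1 / a\<^sup>2) * (F0 - Fs) + (1 / (2 * L * a\<^sup>2)) * n0
        + (b\<^sup>2 / a) * w0 - b * w1 + (1 / (L * a * b\<^sup>2)) * (s - a * n0 + c0N)
      - ((1 / a\<^sup>2) * (FN - Fs - (1 / (2 * L)) * nN) + (1 / b\<^sup>2) * (F1 - Fs)
        + (1 / (2 * L * b\<^sup>2)) * n1 + (c\<^sup>2 / b) * w1)
     = q1 / b\<^sup>2 + q2 / (a * b\<^sup>2)"
    unfolding ia i2 cb q1_def q2_def using a b L
    by (simp add: field_simps power2_eq_square) (simp add: algebra_simps power_numeral_reduce)
  moreover have "q1 / b\<^sup>2 + q2 / (a * b\<^sup>2) \<ge> 0"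
    using consecutive to_last a b unfolding q1_def q2_def by simp
  ultimately show ?thesis
    by linarith
qed

locale ogm_g_momentum =
  fixes L :: real and N :: nat and \<theta> :: "nat \<Rightarrow> real"
    and g :: "'a::real_inner \<Rightarrow> 'a" and x v :: "nat \<Rightarrow> 'a"
  assumes L_pos: "L > 0"
    and thetaN: "\<theta> N = 1"
    and theta_pos: "\<And>i. i < N \<Longrightarrow> \<theta> i > 0"
    and theta_rec: "\<And>i. i < N \<Longrightarrow> (\<theta> i)\<^sup>2 - \<theta> i = (\<theta> (Suc i))\<^sup>2"
    and thetaN1: "\<theta> (N + 1) = 0"
    and v_rec: "\<And>i. i < N \<Longrightarrow>
        v (Suc i) = v i + (1 / (L * \<theta> i * (\<theta> (Suc i))\<^sup>2)) *\<^sub>R g (x i)"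
    and x_rec: "\<And>i. i < N \<Longrightarrow>
        x (Suc i) = x i - (1 / L) *\<^sub>R g (x i)
                    - (2 * (\<theta> (Suc i)) ^ 3 - (\<theta> (Suc i))\<^sup>2) *\<^sub>R v (Suc i)"
begin

lemma theta_pos_atMost: "i \<le> N \<Longrightarrow> \<theta> i > 0"
  using theta_pos[of i] thetaN by (cases "i = N") auto

lemma theta_rec_Suc: "i < N \<Longrightarrow> (\<theta> (Suc (Suc i)))\<^sup>2 = (\<theta> (Suc i))\<^sup>2 - \<theta> (Suc i)"
  using theta_rec[of "Suc i"] thetaN thetaN1 by (cases "Suc i = N") auto

lemma theta_coeff_v:
  assumes "i < N"
  shows "2 * \<theta> (Suc i) ^ 3 - (\<theta> (Suc i))\<^sup>2 + \<theta> (Suc (Suc i)) ^ 4 = \<theta> (Suc i) ^ 4"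
proof -
  have "\<theta> (Suc (Suc i)) ^ 4 = ((\<theta> (Suc (Suc i)))\<^sup>2)\<^sup>2"
    by (simp flip: power_mult)
  then show ?thesis
    unfolding theta_rec_Suc[OF assms] by (simp add: power2_eq_square power3_eq_cube power4_eq_xxxx algebra_simps)
qed

lemma theta_coeff_g: "i < N \<Longrightarrow> 1 / L + \<theta> (Suc i) ^ 4 * (1 / (L * \<theta> i * (\<theta> (Suc i))\<^sup>2)) = \<theta> i / L"
  using L_pos theta_rec[of i] theta_pos_atMost[of i] theta_pos_atMost[of "Suc i"]
  by (simp add: field_simps power4_eq_xxxx power2_eq_square)

lemma x_minus_x_Suc:
  "i < N \<Longrightarrow> x i - x (Suc i) = (1 / L) *\<^sub>R g (x i) + (2 * \<theta> (Suc i) ^ 3 - (\<theta> (Suc i))\<^sup>2) *\<^sub>R v (Suc i)"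
  using x_rec[of i] by simp

lemma x_minus_x_last:
  "j \<le> N \<Longrightarrow> x j - x N = (1 / L) *\<^sub>R (\<Sum>i = j..<N. \<theta> i *\<^sub>R g (x i)) + \<theta> (Suc j) ^ 4 *\<^sub>R v j"
proof (induction j rule: inc_induct)
  case base
  then show ?case using thetaN1 by simp
next
  case (step n)
  have "x n - x N = (x n - x (Suc n)) + (x (Suc n) - x N)"
    by simp
  also have "\<dots> = (1 / L) *\<^sub>R g (x n) + (1 / L) *\<^sub>R (\<Sum>i = Suc n..<N. \<theta> i *\<^sub>R g (x i))
      + (2 * \<theta> (Suc n) ^ 3 - (\<theta> (Suc n))\<^sup>2 + \<theta> (Suc (Suc n)) ^ 4) *\<^sub>R v (Suc n)"
    unfolding step.IH x_minus_x_Suc[OF step.hyps(2)] by (simp add: algebra_simps)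
  also have "\<dots> = (1 / L + \<theta> (Suc n) ^ 4 * (1 / (L * \<theta> n * (\<theta> (Suc n))\<^sup>2))) *\<^sub>R g (x n)
      + (1 / L) *\<^sub>R (\<Sum>i = Suc n..<N. \<theta> i *\<^sub>R g (x i)) + \<theta> (Suc n) ^ 4 *\<^sub>R v n"
    unfolding theta_coeff_v[OF step.hyps(2)] v_rec[OF step.hyps(2)] by (simp add: algebra_simps)
  also have "\<dots> = (1 / L) *\<^sub>R (\<Sum>i = n..<N. \<theta> i *\<^sub>R g (x i)) + \<theta> (Suc n) ^ 4 *\<^sub>R v n"
    unfolding theta_coeff_g[OF step.hyps(2)] using step.hyps(2)
    by (simp add: sum.atLeast_Suc_lessThan scaleR_add_right)
  finally show ?case .
qed

lemma weighted_inner_gradient_sum: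
  assumes "k < N"
  shows "(\<Sum>i = Suc k..N. (\<theta> i / c) * (h \<bullet> g (x i)))
    = (h \<bullet> (\<Sum>i = k..<N. \<theta> i *\<^sub>R g (x i)) - \<theta> k * (h \<bullet> g (x k)) + h \<bullet> g (x N)) / c"
proof -
  have "(\<Sum>i = Suc k..N. \<theta> i *\<^sub>R g (x i))
      = (\<Sum>i = k..<N. \<theta> i *\<^sub>R g (x i)) - \<theta> k *\<^sub>R g (x k) + g (x N)"
    using assms thetaN
    by (simp add: sum.atLeast_Suc_lessThan sum.atLeastLessThan_Suc
        atLeastLessThanSuc_atLeastAtMost[symmetric])
  then have "h \<bullet> (\<Sum>i = Suc k..N. \<theta> i *\<^sub>R g (x i))
      = h \<bullet> (\<Sum>i = k..<N. \<theta> i *\<^sub>R g (x i)) - \<theta> k * (h \<bullet> g (x k)) + h \<bullet> g (x N)"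
    by (simp add: inner_diff_right inner_add_right)
  then show ?thesis
    by (simp add: inner_sum_right sum_divide_distrib[symmetric])
qed

end

theorem proposition1:
  fixes f :: "'a::euclidean_space \<Rightarrow> real" and g :: "'a \<Rightarrow> 'a"
    and L :: real and xs :: 'a and N :: nat and \<theta> :: "nat \<Rightarrow> real"
    and x v :: "nat \<Rightarrow> 'a" and k :: nat
  assumes L_pos: "L > 0"
    and conv: "convex_on UNIV f"
    and grad: "\<And>y. (f has_derivative (\<lambda>h. g y \<bullet> h)) (at y)"
    and smooth: "\<And>y z. norm (g y - g z) \<le> L * norm (y - z)"
    and minimizer: "\<And>y. f xs \<le> f y"
    and N_ge: "N \<ge> 1"
    and thetaN: "\<theta> N = 1"
    and theta_pos: "\<And>i. i < N \<Longrightarrow> \<theta> i > 0"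
    and theta_rec: "\<And>i. i < N \<Longrightarrow> (\<theta> i)\<^sup>2 - \<theta> i = (\<theta> (Suc i))\<^sup>2"
    and thetaN1: "\<theta> (N + 1) = 0"
    and v0: "v 0 = 0"
    and v_rec: "\<And>i. i < N \<Longrightarrow>
        v (Suc i) = v i + (1 / (L * \<theta> i * (\<theta> (Suc i))\<^sup>2)) *\<^sub>R g (x i)"
    and x_rec: "\<And>i. i < N \<Longrightarrow>
        x (Suc i) = x i - (1 / L) *\<^sub>R g (x i)
                    - (2 * (\<theta> (Suc i)) ^ 3 - (\<theta> (Suc i))\<^sup>2) *\<^sub>R v (Suc i)"
    and k_lt: "k < N"
  shows "(let A = (\<lambda>j. (1 / (\<theta> j)\<^sup>2) * (f (x N) - f xs - (1 / (2 * L)) * (norm (g (x N)))\<^sup>2));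
              B = (\<lambda>j. (1 / (\<theta> j)\<^sup>2) * (f (x j) - f xs));
              C = (\<lambda>j. (1 / (2 * L * (\<theta> j)\<^sup>2)) * (norm (g (x j)))\<^sup>2);
              E = (\<lambda>j. ((\<theta> (Suc j))\<^sup>2 / \<theta> j) * (g (x j) \<bullet> v j))
          in A k + B (Suc k) + C (Suc k) + E (Suc k)
             \<le> A (Suc k) + B k + C k + E k - \<theta> (Suc k) * (g (x (Suc k)) \<bullet> v (Suc k))
               + (\<Sum>i = Suc k..N. (\<theta> i / (L * \<theta> k * (\<theta> (Suc k))\<^sup>2)) * (g (x k) \<bullet> g (x i))))"
proof -
  interpret ogm_g_momentum L N \<theta> g x v
    using L_pos thetaN theta_pos theta_rec thetaN1 v_rec x_rec by unfold_locales
  define S where "S = (\<Sum>i = k..<N. \<theta> i *\<^sub>R g (x i))"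
  have "f (x (Suc k)) + g (x (Suc k)) \<bullet> (x k - x (Suc k)) + (norm (g (x k) - g (x (Suc k))))\<^sup>2 / (2 * L)
      \<le> f (x k)"
    by (rule convex_smooth_interpolation[OF L_pos conv grad smooth])
  then have consecutive: "f (x (Suc k)) + (g (x k) \<bullet> g (x (Suc k))) / L
      + (2 * \<theta> (Suc k) ^ 3 - (\<theta> (Suc k))\<^sup>2) * (g (x (Suc k)) \<bullet> v (Suc k))
      + ((norm (g (x k)))\<^sup>2 - 2 * (g (x k) \<bullet> g (x (Suc k))) + (norm (g (x (Suc k))))\<^sup>2) / (2 * L) \<le> f (x k)"
    unfolding x_minus_x_Suc[OF k_lt] by (simp add: power2_norm_diff inner_add_right inner_commute)
  have "f (x k) + g (x k) \<bullet> (x N - x k) + (norm (g (x N) - g (x k)))\<^sup>2 / (2 * L) \<le> f (x N)"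
    by (rule convex_smooth_interpolation[OF L_pos conv grad smooth])
  then have to_last: "f (x k) - (g (x k) \<bullet> S) / L - \<theta> (Suc k) ^ 4 * (g (x k) \<bullet> v k)
      + ((norm (g (x N)))\<^sup>2 - 2 * (g (x k) \<bullet> g (x N)) + (norm (g (x k)))\<^sup>2) / (2 * L) \<le> f (x N)"
    unfolding minus_diff_eq[of "x k" "x N", symmetric] x_minus_x_last[OF less_imp_le[OF k_lt]] S_def[symmetric]
    by (simp add: power2_norm_diff inner_commute inner_diff_right)
  show ?thesis
    unfolding Let_def weighted_inner_gradient_sum[OF k_lt] S_def[symmetric]
    using ogm_g_potential_combination[OF L_pos theta_pos_atMost theta_pos_atMost theta_rec theta_rec_Suc
        consecutive to_last, of "f xs"] k_lt
    by (simp add: power2_norm_eq_inner)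
qed

end
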